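(* Let $G$ be a graph of order $n$. Then $\alpha(G) \le m_G[0,\,n-\alpha(G)]$.
   Context: All graphs are finite and simple. The Laplacian matrix of $G$ is $L(G)=D(G)-A(G)$, where $D(G)$ is the diagonal matrix of vertex degrees and $A(G)$ the adjacency matrix; its eigenvalues (with multiplicity) are the Laplacian eigenvalues of $G$. For an interval $I\subseteq\mathbb{R}$, $m_G I$ denotes the number of Laplacian eigenvalues of $G$, counted with multiplicity, lying in $I$. $\alpha(G)$ denotes the independence number of $G$. *)

theory Defs
  imports "Jordan_Normal_Form.Char_Poly"
begin

definition simple_graph :: "nat \<Rightarrow> (nat \<Rightarrow> nat \<Rightarrow> bool) \<Rightarrow> bool" where
  "simple_graph n E \<longleftrightarrow> (\<forall>u<n. \<forall>v<n. E u v \<longleftrightarrow> E v u) \<and> (\<forall>v<n. \<not> E v v)"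

definition degree :: "nat \<Rightarrow> (nat \<Rightarrow> nat \<Rightarrow> bool) \<Rightarrow> nat \<Rightarrow> nat" where
  "degree n E v = card {u. u < n \<and> E v u}"

definition laplacian :: "nat \<Rightarrow> (nat \<Rightarrow> nat \<Rightarrow> bool) \<Rightarrow> real mat" where
  "laplacian n E = mat n n (\<lambda>(i,j). (if i = j then real (degree n E i) else 0)
                                     - (if E i j then 1 else 0))"

definition lap_eig_count :: "nat \<Rightarrow> (nat \<Rightarrow> nat \<Rightarrow> bool) \<Rightarrow> real set \<Rightarrow> nat" where
  "lap_eig_count n E I =
     (\<Sum>x\<in>{x. poly (char_poly (laplacian n E)) x = 0 \<and> x \<in> I}.
        order x (char_poly (laplacian n E)))"

definition independent_set :: "nat \<Rightarrow> (nat \<Rightarrow> nat \<Rightarrow> bool) \<Rightarrow> nat set \<Rightarrow> bool" where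
  "independent_set n E S \<longleftrightarrow> S \<subseteq> {0..<n} \<and> (\<forall>u\<in>S. \<forall>v\<in>S. \<not> E u v)"

definition independence_number :: "nat \<Rightarrow> (nat \<Rightarrow> nat \<Rightarrow> bool) \<Rightarrow> nat" where
  "independence_number n E = Max (card ` {S. independent_set n E S})"

end

theory Submission
  imports Defs
begin

text \<open>Let \<open>S\<close> be a maximum independent set and \<open>c = n - \<alpha>(G)\<close>. On vectors supported
  on \<open>S\<close> the Laplacian quadratic form only sees the diagonal, so it is at most the maximum
  degree on \<open>S\<close>, hence at most \<open>c\<close>, times the squared norm. Diagonalising \<open>L(G)\<close>
  orthogonally, if fewer than \<open>|S|\<close> eigenvalues were \<open>\<le> c\<close>, some nonzero vector supported
  on \<open>S\<close> would be orthogonal to all eigenvectors with eigenvalue \<open>\<le> c\<close>, and its quadratic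
  form would exceed \<open>c\<close> times its squared norm. Since \<open>L(G)\<close> is positive semidefinite,
  these eigenvalues lie in \<open>[0, c]\<close>.\<close>

section \<open>Roots counted with multiplicity\<close>

definition root_count :: "'a::idom poly \<Rightarrow> 'a set \<Rightarrow> nat" where
  "root_count p I = (\<Sum>x\<in>{x. poly p x = 0 \<and> x \<in> I}. order x p)"

lemma root_count_cong:
  assumes "\<And>x. poly p x = 0 \<Longrightarrow> x \<in> I \<longleftrightarrow> x \<in> J"
  shows "root_count p I = root_count p J"
  unfolding root_count_def using assms by (metis (mono_tags, lifting))

lemma order_prod_linear_factors:
  fixes d :: "nat \<Rightarrow> 'a::idom"
  shows "order x (\<Prod>i<n. [:- d i, 1:]) = card {i. i < n \<and> d i = x}"
proof (induction n)
  case 0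
  show ?case by (simp add: order_1_eq_0)
next
  case (Suc n)
  let ?p = "\<Prod>i<n. [:- d i, 1:]"
  have "?p * [:- d n, 1:] \<noteq> 0"
    by (simp only: mult_eq_0_iff) (simp add: prod_zero_iff)
  hence "order x (\<Prod>i<Suc n. [:- d i, 1:]) = order x ?p + order x [:- d n, 1:]"
    unfolding prod.lessThan_Suc by (rule order_mult)
  moreover have "{i. i < Suc n \<and> d i = x} = {i. i < n \<and> d i = x} \<union> (if d n = x then {n} else {})"
    by (auto simp: less_Suc_eq)
  ultimately show ?case
    using Suc by (simp add: order_linear')
qed

lemma root_count_prod_linear_factors:
  fixes d :: "nat \<Rightarrow> 'a::idom"
  shows "root_count (\<Prod>i<n. [:- d i, 1:]) I = card {i. i < n \<and> d i \<in> I}"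
proof -
  let ?p = "\<Prod>i<n. [:- d i, 1:]"
  have roots: "{x. poly ?p x = 0 \<and> x \<in> I} = d ` {..<n} \<inter> I"
    by (auto simp: poly_prod prod_zero_iff)
  have "root_count ?p I = (\<Sum>x\<in>d ` {..<n} \<inter> I. card {i. i < n \<and> d i = x})"
    unfolding root_count_def roots by (simp add: order_prod_linear_factors)
  also have "\<dots> = card (\<Union>x\<in>d ` {..<n} \<inter> I. {i. i < n \<and> d i = x})"
    by (rule card_UN_disjoint[symmetric]) auto
  also have "(\<Union>x\<in>d ` {..<n} \<inter> I. {i. i < n \<and> d i = x}) = {i. i < n \<and> d i \<in> I}"
    by auto
  finally show ?thesis .
qed

lemma char_poly_diagonal_mat:
  assumes D: "D \<in> carrier_mat n n" and diag: "diagonal_mat D"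
  shows "char_poly D = (\<Prod>i<n. [:- D $$ (i,i), 1:])"
proof -
  have "upper_triangular D"
    using D diag by (auto simp: upper_triangular_def diagonal_mat_def)
  hence "char_poly D = (\<Prod>a\<leftarrow>diag_mat D. [:- a, 1:])"
    by (rule char_poly_upper_triangular[OF D])
  also have "\<dots> = (\<Prod>i<n. [:- D $$ (i,i), 1:])"
    using D by (simp add: diag_mat_def o_def prod.distinct_set_conv_list[symmetric] atLeast0LessThan)
  finally show ?thesis .
qed

section \<open>Spectral theorem for real symmetric matrices\<close>

lemma real_symmetric_complex_eigenvalue_real:
  fixes A :: "real mat"
  assumes A: "A \<in> carrier_mat n n" and sym: "A\<^sup>T = A"
    and ev: "eigenvalue (map_mat complex_of_real A) a"
  shows "a \<in> \<real>"
proof -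
  let ?C = "map_mat complex_of_real A"
  have C: "?C \<in> carrier_mat n n" and CT: "?C\<^sup>T = ?C"
    using A by (auto simp: map_mat_transpose sym)
  obtain w where w: "w \<in> carrier_vec n" "w \<noteq> 0\<^sub>v n" and Cw: "?C *\<^sub>v w = a \<cdot>\<^sub>v w"
    using ev C unfolding eigenvalue_def eigenvector_def by auto
  have conj_Cw: "conjugate (?C *\<^sub>v w) = ?C *\<^sub>v conjugate w"
    using A w by (intro eq_vecI) (auto simp: scalar_prod_def sum_conjugate conjugate_dist_mul)
  have "a * (w \<bullet>c w) = (?C *\<^sub>v w) \<bullet>c w"
    using w by (simp add: Cw)
  also have "\<dots> = (?C\<^sup>T *\<^sub>v w) \<bullet> conjugate w"
    by (simp add: CT)
  also have "\<dots> = w \<bullet>c (?C *\<^sub>v w)"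
    using transpose_vec_mult_scalar[OF C, of "conjugate w" w] w by (simp add: conj_Cw)
  also have "\<dots> = cnj a * (w \<bullet>c w)"
    using w by (simp add: Cw conjugate_smult_vec)
  finally have "a = cnj a"
    using w by simp
  thus ?thesis
    by (simp add: Reals_cnj_iff)
qed

lemma real_symmetric_has_eigenvalue:
  fixes A :: "real mat"
  assumes A: "A \<in> carrier_mat n n" and sym: "A\<^sup>T = A" and n: "0 < n"
  shows "\<exists>e. eigenvalue A e"
proof -
  let ?C = "map_mat complex_of_real A"
  have C: "?C \<in> carrier_mat n n" using A by simp
  obtain as where cp: "char_poly ?C = (\<Prod>a\<leftarrow>as. [:- a, 1:])" and "length as = n"
    using char_poly_factorized[OF C] by blast
  then obtain a where "a \<in> set as"
    using n by (cases as) auto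
  hence root: "poly (char_poly ?C) a = 0"
    unfolding cp poly_prod_list by (auto simp: prod_list_zero_iff)
  hence "a \<in> \<real>"
    using real_symmetric_complex_eigenvalue_real[OF A sym] eigenvalue_root_char_poly[OF C] by blast
  then obtain e where a: "a = complex_of_real e"
    by (auto elim: Reals_cases)
  have "complex_of_real (poly (char_poly A) e) = poly (char_poly ?C) a"
    unfolding a of_real_hom.char_poly_hom[OF A] by (simp add: of_real_hom.poly_map_poly)
  hence "poly (char_poly A) e = 0"
    using root by simp
  thus ?thesis
    using eigenvalue_root_char_poly[OF A] by blast
qed

lemma reflection_mat_involutive:
  fixes w :: "real vec"
  assumes w: "w \<in> carrier_vec n" and a: "a * (w \<bullet> w) = 2"
  shows "mat n n (\<lambda>(i,j). (if i = j then 1 else 0) - a * w$i * w$j)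
       * mat n n (\<lambda>(i,j). (if i = j then 1 else 0) - a * w$i * w$j) = 1\<^sub>m n"
    (is "?H * ?H = _")
proof (rule eq_matI)
  fix i j assume "i < dim_row (1\<^sub>m n :: real mat)" "j < dim_col (1\<^sub>m n :: real mat)"
  hence i: "i < n" and j: "j < n" by auto
  have ww: "(\<Sum>k<n. w$k * w$k) = w \<bullet> w"
    using w by (simp add: scalar_prod_def lessThan_atLeast0)
  have "(?H * ?H) $$ (i,j) = (\<Sum>k<n. ((if i = k then 1 else 0) - a * w$i * w$k)
                                     * ((if k = j then 1 else 0) - a * w$k * w$j))"
    using i j by (simp add: scalar_prod_def lessThan_atLeast0)
  also have "\<dots> = (if i = j then 1 else 0) - 2 * a * w$i * w$j
                  + a * a * w$i * w$j * (\<Sum>k<n. w$k * w$k)"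
    using i j by (simp add: algebra_simps sum.distrib sum_subtractf sum_distrib_left
        if_distrib[of "\<lambda>x. x * _"] if_distrib[of "\<lambda>x. _ * x"] cong: if_cong)
  also have "\<dots> = 1\<^sub>m n $$ (i,j)"
    using i j a by (simp add: ww algebra_simps)
  finally show "(?H * ?H) $$ (i,j) = 1\<^sub>m n $$ (i,j)" .
qed auto

lemma householder_mat_exists:
  fixes u :: "real vec"
  assumes u: "u \<in> carrier_vec n" "u \<bullet> u = 1" and n: "0 < n"
  shows "\<exists>H \<in> carrier_mat n n. H\<^sup>T = H \<and> H * H = 1\<^sub>m n \<and> H *\<^sub>v unit_vec n 0 = u"
proof (cases "u = unit_vec n 0")
  case True
  thus ?thesis by (intro bexI[of _ "1\<^sub>m n"]) auto
next
  case False
  define w where "w = u - unit_vec n 0"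
  define a where "a = 1 / (1 - u$0)"
  have w: "w \<in> carrier_vec n" using u by (simp add: w_def)
  have ww: "w \<bullet> w = 2 * (1 - u$0)"
    using u n by (simp add: w_def minus_scalar_prod_distrib scalar_prod_minus_distrib
        scalar_prod_left_unit scalar_prod_right_unit)
  have u0: "1 - u$0 \<noteq> 0"
  proof
    assume "1 - u$0 = 0"
    hence "w \<bullet> w = 0" using ww by simp
    hence w0: "w = 0\<^sub>v n" using conjugate_square_eq_0_vec[OF w] by simp
    have "u = unit_vec n 0"
    proof (rule eq_vecI)
      fix i assume "i < dim_vec (unit_vec n 0)"
      hence "i < n" and "w $ i = 0" using w0 by auto
      thus "u $ i = unit_vec n 0 $ i" using u by (simp add: w_def)
    qed (use u in simp)
    thus False using False by simp
  qed
  have a_inv: "a * (1 - u$0) = 1"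
    unfolding a_def using u0 by simp
  have a_w0: "a * w$0 = -1"
    using n a_inv by (simp add: w_def algebra_simps)
  define H where "H = mat n n (\<lambda>(i,j). (if i = j then 1 else 0) - a * w$i * w$j)"
  have "H * H = 1\<^sub>m n"
    unfolding H_def by (rule reflection_mat_involutive[OF w]) (metis ww a_inv mult.left_commute mult.right_neutral)
  moreover have "H\<^sup>T = H"
    unfolding H_def by (rule eq_matI) auto
  moreover have "H *\<^sub>v unit_vec n 0 = u"
  proof (rule eq_vecI)
    fix i assume "i < dim_vec u"
    hence i: "i < n" using u by simp
    have "(H *\<^sub>v unit_vec n 0) $ i = H $$ (i,0)"
      using i n by (simp add: H_def scalar_prod_right_unit)
    also have "\<dots> = (if i = 0 then 1 else 0) - w$i * (a * w$0)"
      using i n by (simp add: H_def mult_ac)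
    also have "\<dots> = u$i"
      using i u by (simp only: a_w0) (simp add: w_def)
    finally show "(H *\<^sub>v unit_vec n 0) $ i = u $ i" .
  qed (use u in \<open>simp add: H_def\<close>)
  ultimately show ?thesis
    by (intro bexI[of _ H]) (auto simp: H_def)
qed

lemma real_symmetric_unit_eigenvector:
  fixes A :: "real mat"
  assumes A: "A \<in> carrier_mat n n" and sym: "A\<^sup>T = A" and n: "0 < n"
  shows "\<exists>u e. u \<in> carrier_vec n \<and> u \<bullet> u = 1 \<and> A *\<^sub>v u = e \<cdot>\<^sub>v u"
proof -
  obtain e where "eigenvalue A e"
    using real_symmetric_has_eigenvalue[OF A sym n] by blast
  then obtain v where v: "v \<in> carrier_vec n" "v \<noteq> 0\<^sub>v n" and Av: "A *\<^sub>v v = e \<cdot>\<^sub>v v"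
    using A unfolding eigenvalue_def eigenvector_def by auto
  have vv: "0 < v \<bullet> v"
    using conjugate_square_greater_0_vec[OF v(1)] v(2) by simp
  define u where "u = (1 / sqrt (v \<bullet> v)) \<cdot>\<^sub>v v"
  have "u \<bullet> u = 1"
    using v vv by (simp add: u_def power_divide flip: power2_eq_square)
  moreover have "A *\<^sub>v u = e \<cdot>\<^sub>v u"
    using A v by (simp add: u_def mult_mat_vec Av smult_smult_assoc mult.commute)
  ultimately show ?thesis
    using v by (intro exI[of _ u] exI[of _ e]) (simp add: u_def)
qed

lemma symmetric_mat_first_column_block:
  fixes B :: "'a::comm_ring_1 mat"
  assumes B: "B \<in> carrier_mat (Suc m) (Suc m)" and sym: "B\<^sup>T = B"
    and col0: "B *\<^sub>v unit_vec (Suc m) 0 = e \<cdot>\<^sub>v unit_vec (Suc m) 0"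
  shows "B = four_block_mat (mat 1 1 (\<lambda>_. e)) (0\<^sub>m 1 m) (0\<^sub>m m 1)
               (mat m m (\<lambda>(i,j). B $$ (Suc i, Suc j)))"
    (is "B = ?blocks")
proof (rule eq_matI)
  have col: "B $$ (i,0) = (if i = 0 then e else 0)" if "i < Suc m" for i
    using arg_cong[OF col0, of "\<lambda>v. v $ i"] that B by (simp add: scalar_prod_right_unit)
  have row: "B $$ (0,j) = (if j = 0 then e else 0)" if "j < Suc m" for j
    using col[OF that] arg_cong[OF sym, of "\<lambda>M. M $$ (0,j)"] that B by simp
  fix i j assume "i < dim_row ?blocks" "j < dim_col ?blocks"
  hence i: "i < Suc m" and j: "j < Suc m" by auto
  show "B $$ (i,j) = ?blocks $$ (i,j)"
    using i j col row by (cases i; cases j) auto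
qed (use B in auto)

lemma real_symmetric_deflation:
  fixes A :: "real mat"
  assumes A: "A \<in> carrier_mat (Suc m) (Suc m)" and sym: "A\<^sup>T = A"
  shows "\<exists>H e A'. H \<in> carrier_mat (Suc m) (Suc m) \<and> H\<^sup>T = H \<and> H * H = 1\<^sub>m (Suc m)
      \<and> A' \<in> carrier_mat m m \<and> A'\<^sup>T = A'
      \<and> H * A * H = four_block_mat (mat 1 1 (\<lambda>_. e)) (0\<^sub>m 1 m) (0\<^sub>m m 1) A'"
proof -
  let ?n = "Suc m" and ?e0 = "unit_vec (Suc m) 0"
  obtain u e where u: "u \<in> carrier_vec ?n" "u \<bullet> u = 1" and Au: "A *\<^sub>v u = e \<cdot>\<^sub>v u"
    using real_symmetric_unit_eigenvector[OF A sym] by blast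
  obtain H where H: "H \<in> carrier_mat ?n ?n" and HT: "H\<^sup>T = H" and HH: "H * H = 1\<^sub>m ?n"
    and He0: "H *\<^sub>v ?e0 = u"
    using householder_mat_exists[OF u] by blast
  define B where "B = H * A * H"
  have B: "B \<in> carrier_mat ?n ?n"
    using H A by (simp add: B_def)
  have "B\<^sup>T = H\<^sup>T * (H * A)\<^sup>T"
    unfolding B_def using H A by (intro transpose_mult) auto
  also have "(H * A)\<^sup>T = A\<^sup>T * H\<^sup>T"
    by (rule transpose_mult[OF H A])
  finally have BT: "B\<^sup>T = B"
    using H A by (simp add: HT sym B_def)
  have "B *\<^sub>v ?e0 = H *\<^sub>v (e \<cdot>\<^sub>v u)"
    using H A by (simp add: B_def assoc_mult_mat_vec[of _ ?n ?n _ ?n] He0 Au)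
  also have "\<dots> = e \<cdot>\<^sub>v ((H * H) *\<^sub>v ?e0)"
    using H u by (simp add: mult_mat_vec He0)
  finally have Be0: "B *\<^sub>v ?e0 = e \<cdot>\<^sub>v ?e0"
    by (simp add: HH)
  define A' where "A' = mat m m (\<lambda>(i,j). B $$ (Suc i, Suc j))"
  have "A'\<^sup>T = A'"
  proof (rule eq_matI)
    fix i j assume "i < dim_row A'" "j < dim_col A'"
    thus "A'\<^sup>T $$ (i,j) = A' $$ (i,j)"
      using arg_cong[OF BT, of "\<lambda>M. M $$ (Suc i, Suc j)"] B by (simp add: A'_def)
  qed (simp_all add: A'_def)
  thus ?thesis
    using symmetric_mat_first_column_block[OF B BT Be0] H HT HH
    by (intro exI[of _ H] exI[of _ e] exI[of _ A']) (simp add: A'_def B_def)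
qed

theorem real_symmetric_orthogonally_diagonalizable:
  fixes A :: "real mat"
  assumes "A \<in> carrier_mat n n" and "A\<^sup>T = A"
  shows "\<exists>P D. similar_mat_wit A D P P\<^sup>T \<and> diagonal_mat D"
  using assms
proof (induction n arbitrary: A)
  case 0
  thus ?case
    by (intro exI[of _ "1\<^sub>m 0"] exI[of _ A]) (auto simp: similar_mat_wit_refl diagonal_mat_def)
next
  case (Suc m)
  let ?n = "Suc m" and ?E = "\<lambda>e. mat 1 1 (\<lambda>_. e) :: real mat"
  obtain H e A' where H: "H \<in> carrier_mat ?n ?n" and HT: "H\<^sup>T = H" and HH: "H * H = 1\<^sub>m ?n"
    and A': "A' \<in> carrier_mat m m" "A'\<^sup>T = A'"
    and HAH: "H * A * H = four_block_mat (?E e) (0\<^sub>m 1 m) (0\<^sub>m m 1) A'"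
    using real_symmetric_deflation[OF Suc.prems] by blast
  obtain P' D' where sim': "similar_mat_wit A' D' P' P'\<^sup>T" and D': "diagonal_mat D'"
    using Suc.IH[OF A'] by blast
  have P': "P' \<in> carrier_mat m m" and D'c: "D' \<in> carrier_mat m m"
    using similar_mat_witD2[OF A'(1) sim'] by auto
  define Q where "Q = four_block_mat (1\<^sub>m 1) (0\<^sub>m 1 m) (0\<^sub>m m 1) P'"
  define D where "D = four_block_mat (?E e) (0\<^sub>m 1 m) (0\<^sub>m m 1) D'"
  have Q: "Q \<in> carrier_mat ?n ?n"
    using four_block_carrier_mat[OF one_carrier_mat[of 1] P'] by (simp add: Q_def)
  have QT: "Q\<^sup>T = four_block_mat (1\<^sub>m 1) (0\<^sub>m 1 m) (0\<^sub>m m 1) P'\<^sup>T"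
    using P' by (simp add: Q_def transpose_four_block_mat[of _ 1 1 _ m _ m])
  have "similar_mat_wit (H * A * H) D Q Q\<^sup>T"
    unfolding HAH D_def QT unfolding Q_def
    by (rule similar_mat_wit_four_block[OF similar_mat_wit_refl sim']) (use P' A' in simp_all)
  moreover have "similar_mat_wit A (H * A * H) H H"
  proof (rule similar_mat_witI[OF HH HH])
    have "H * (H * A * H) * H = (H * H) * A * (H * H)"
      using H Suc.prems(1) by (simp add: assoc_mult_mat[of _ ?n ?n _ ?n _ ?n])
    also have "\<dots> = A"
      using Suc.prems(1) by (simp add: HH)
    finally show "A = H * (H * A * H) * H" ..
  qed (use H Suc.prems(1) in auto)
  ultimately have "similar_mat_wit A D (H * Q) (Q\<^sup>T * H)"
    by (rule similar_mat_wit_trans[rotated])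
  moreover have "Q\<^sup>T * H = (H * Q)\<^sup>T"
    using H Q by (simp add: transpose_mult HT)
  moreover have "diagonal_mat D"
    using D' D'c by (auto simp: D_def diagonal_mat_def)
  ultimately show ?case
    by auto
qed

section \<open>Counting eigenvalues below a quadratic form bound\<close>

lemma eigenvalue_nonneg_of_psd:
  fixes A :: "real mat"
  assumes A: "A \<in> carrier_mat n n"
    and psd: "\<And>x. x \<in> carrier_vec n \<Longrightarrow> 0 \<le> x \<bullet> (A *\<^sub>v x)"
    and ev: "eigenvalue A e"
  shows "0 \<le> e"
proof -
  obtain v where v: "v \<in> carrier_vec n" "v \<noteq> 0\<^sub>v n" and Av: "A *\<^sub>v v = e \<cdot>\<^sub>v v"
    using ev A unfolding eigenvalue_def eigenvector_def by auto
  have "0 < v \<bullet> v"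
    using conjugate_square_greater_0_vec[OF v(1)] v(2) by simp
  moreover have "0 \<le> e * (v \<bullet> v)"
    using psd[OF v(1)] v(1) by (simp add: Av)
  ultimately show ?thesis
    by (simp add: zero_le_mult_iff)
qed

lemma orthogonal_similar_quadratic_form:
  fixes A :: "'a::comm_ring_1 mat"
  assumes A: "A \<in> carrier_mat n n" and sim: "similar_mat_wit A D P P\<^sup>T"
    and x: "x \<in> carrier_vec n"
  shows "x \<bullet> (A *\<^sub>v x) = (P\<^sup>T *\<^sub>v x) \<bullet> (D *\<^sub>v (P\<^sup>T *\<^sub>v x))"
    and "x \<bullet> x = (P\<^sup>T *\<^sub>v x) \<bullet> (P\<^sup>T *\<^sub>v x)"
proof -
  from similar_mat_witD2[OF A sim] have P: "P \<in> carrier_mat n n" and D: "D \<in> carrier_mat n n"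
    and PPT: "P * P\<^sup>T = 1\<^sub>m n" and APD: "A = P * D * P\<^sup>T"
    by auto
  have shift: "x \<bullet> (P *\<^sub>v z) = (P\<^sup>T *\<^sub>v x) \<bullet> z" if "z \<in> carrier_vec n" for z
    using transpose_vec_mult_scalar[OF P that x] by simp
  have "A *\<^sub>v x = P *\<^sub>v (D *\<^sub>v (P\<^sup>T *\<^sub>v x))"
    using P D x by (simp add: APD assoc_mult_mat_vec[of _ n n _ n])
  thus "x \<bullet> (A *\<^sub>v x) = (P\<^sup>T *\<^sub>v x) \<bullet> (D *\<^sub>v (P\<^sup>T *\<^sub>v x))"
    using P D x by (simp add: shift)
  have "P *\<^sub>v (P\<^sup>T *\<^sub>v x) = (P * P\<^sup>T) *\<^sub>v x"
    using P x by (simp add: assoc_mult_mat_vec[of _ n n _ n])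
  hence "x = P *\<^sub>v (P\<^sup>T *\<^sub>v x)"
    using x by (simp add: PPT)
  hence "x \<bullet> x = x \<bullet> (P *\<^sub>v (P\<^sup>T *\<^sub>v x))"
    by simp
  thus "x \<bullet> x = (P\<^sup>T *\<^sub>v x) \<bullet> (P\<^sup>T *\<^sub>v x)"
    using P x by (simp add: shift)
qed

lemma diagonal_mat_quadratic_form:
  fixes D :: "'a::comm_ring_1 mat"
  assumes D: "D \<in> carrier_mat n n" "diagonal_mat D" and y: "y \<in> carrier_vec n"
  shows "y \<bullet> (D *\<^sub>v y) = (\<Sum>i<n. D $$ (i,i) * (y$i)\<^sup>2)"
proof -
  have "(D *\<^sub>v y) $ i = D $$ (i,i) * y$i" if "i < n" for i
  proof -
    have "(D *\<^sub>v y) $ i = (\<Sum>j\<in>{0..<n}. D $$ (i,j) * y$j)"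
      using D y that by (simp add: scalar_prod_def)
    also have "\<dots> = (\<Sum>j\<in>{0..<n}. if j = i then D $$ (i,i) * y$i else 0)"
      using D that by (intro sum.cong) (auto simp: diagonal_mat_def)
    also have "\<dots> = D $$ (i,i) * y$i"
      using that by simp
    finally show ?thesis .
  qed
  thus ?thesis
    using D y by (simp add: scalar_prod_def lessThan_atLeast0 power2_eq_square mult_ac)
qed

lemma weighted_squares_le_imp_zero:
  fixes d y :: "'i \<Rightarrow> real"
  assumes I: "finite I" and small: "\<And>i. i \<in> I \<Longrightarrow> d i \<le> c \<Longrightarrow> y i = 0"
    and le: "(\<Sum>i\<in>I. d i * (y i)\<^sup>2) \<le> c * (\<Sum>i\<in>I. (y i)\<^sup>2)"
  shows "\<forall>i\<in>I. y i = 0"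
proof -
  have nonneg: "0 \<le> (d i - c) * (y i)\<^sup>2" if "i \<in> I" for i
  proof (cases "d i \<le> c")
    case True
    thus ?thesis using small[OF that] by simp
  qed simp
  have "(\<Sum>i\<in>I. (d i - c) * (y i)\<^sup>2) \<le> 0"
    using le by (simp add: left_diff_distrib sum_subtractf sum_distrib_left)
  hence "(\<Sum>i\<in>I. (d i - c) * (y i)\<^sup>2) = 0"
    by (intro antisym sum_nonneg nonneg)
  hence zero: "\<forall>i\<in>I. (d i - c) * (y i)\<^sup>2 = 0"
    by (simp add: sum_nonneg_eq_0_iff[OF I] nonneg)
  show ?thesis
  proof
    fix i assume i: "i \<in> I"
    show "y i = 0"
    proof (cases "d i \<le> c")
      case True
      thus ?thesis using small[OF i] by simp
    next
      case False
      thus ?thesis using bspec[OF zero i] by auto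
    qed
  qed
qed

lemma underdetermined_homogeneous_system:
  fixes q :: "nat \<Rightarrow> nat \<Rightarrow> 'a::field"
  assumes "k < a"
  shows "\<exists>z. (\<exists>t<a. z t \<noteq> 0) \<and> (\<forall>j<k. (\<Sum>t<a. q j t * z t) = 0)"
proof -
  define M where "M = mat\<^sub>r a a (\<lambda>j. if j = a - 1 then 0\<^sub>v a else vec a (q j))"
  have M: "M \<in> carrier_mat a a"
    by (simp add: M_def)
  have "det M = 0"
    unfolding M_def using assms by (intro det_row_0) auto
  then obtain v where v: "v \<in> carrier_vec a" "v \<noteq> 0\<^sub>v a" and Mv: "M *\<^sub>v v = 0\<^sub>v a"
    using det_0_iff_vec_prod_zero_field[OF M] by blast
  have "\<exists>t<a. v $ t \<noteq> 0"
    using v by (metis eq_vecI carrier_vecD index_zero_vec)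
  moreover have "(\<Sum>t<a. q j t * v $ t) = 0" if "j < k" for j
  proof -
    have "j < a" "j \<noteq> a - 1"
      using that assms by auto
    thus ?thesis
      using arg_cong[OF Mv, of "\<lambda>w. w $ j"] v
      by (simp add: M_def scalar_prod_def lessThan_atLeast0)
  qed
  ultimately show ?thesis
    by blast
qed

lemma exists_supported_vec_orthogonal:
  fixes w :: "nat \<Rightarrow> 'a::field vec"
  assumes S: "S \<subseteq> {..<n}" and K: "finite K" and card: "card K < card S"
  shows "\<exists>x \<in> carrier_vec n. x \<noteq> 0\<^sub>v n \<and> (\<forall>i<n. i \<notin> S \<longrightarrow> x $ i = 0)
           \<and> (\<forall>j\<in>K. w j \<bullet> x = 0)"
proof -
  have S_fin: "finite S"
    using S finite_subset by blast
  obtain f where f: "bij_betw f {..<card S} S"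
    using ex_bij_betw_nat_finite[OF S_fin] by (auto simp: atLeast0LessThan)
  obtain g where g: "bij_betw g {..<card K} K"
    using ex_bij_betw_nat_finite[OF K] by (auto simp: atLeast0LessThan)
  obtain z where z: "\<exists>t<card S. z t \<noteq> 0"
    and zK: "\<forall>j<card K. (\<Sum>t<card S. w (g j) $ f t * z t) = 0"
    using underdetermined_homogeneous_system[OF card, of "\<lambda>j t. w (g j) $ f t"] by blast
  define x where "x = vec n (\<lambda>i. if i \<in> S then z (inv_into {..<card S} f i) else 0)"
  have x_f: "x $ f t = z t" if "t < card S" for t
  proof -
    have "f t \<in> S"
      using f that by (auto simp: bij_betw_def)
    thus ?thesis
      using f S that by (auto simp: x_def bij_betw_def inv_into_f_f)
  qed
  have "w j \<bullet> x = 0" if j: "j \<in> K" for j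
  proof -
    have "w j \<bullet> x = (\<Sum>i\<in>S. w j $ i * x $ i)"
      unfolding scalar_prod_def using S
      by (intro sum.mono_neutral_right) (auto simp: x_def)
    also have "\<dots> = (\<Sum>t<card S. w j $ f t * z t)"
      by (simp add: sum.reindex_bij_betw[OF f, symmetric] x_f)
    also have "\<dots> = 0"
    proof -
      obtain i where "i < card K" "j = g i"
        using g j by (auto simp: bij_betw_def)
      thus ?thesis using zK by blast
    qed
    finally show ?thesis .
  qed
  moreover obtain t where t: "t < card S" "z t \<noteq> 0"
    using z by blast
  hence "x \<noteq> 0\<^sub>v n"
    using x_f[OF t(1)] f S by (metis bij_betwE index_zero_vec(1) lessThan_iff subsetD)
  ultimately show ?thesis
    by (intro bexI[of _ x]) (auto simp: x_def)
qed

theorem card_le_root_count_char_poly_of_quadratic_form_bound: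
  fixes A :: "real mat"
  assumes A: "A \<in> carrier_mat n n" and sym: "A\<^sup>T = A" and S: "S \<subseteq> {..<n}"
    and bound: "\<And>x. x \<in> carrier_vec n \<Longrightarrow> (\<forall>i<n. i \<notin> S \<longrightarrow> x $ i = 0)
                  \<Longrightarrow> x \<bullet> (A *\<^sub>v x) \<le> c * (x \<bullet> x)"
  shows "card S \<le> root_count (char_poly A) {..c}"
proof (rule ccontr)
  obtain P D where sim: "similar_mat_wit A D P P\<^sup>T" and diag: "diagonal_mat D"
    using real_symmetric_orthogonally_diagonalizable[OF A sym] by blast
  have P: "P \<in> carrier_mat n n" and D: "D \<in> carrier_mat n n"
    using similar_mat_witD2[OF A sim] by auto
  define K where "K = {j. j < n \<and> D $$ (j,j) \<le> c}"
  have "char_poly A = char_poly D"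
    using sim by (intro char_poly_similar) (auto simp: similar_mat_def)
  hence "root_count (char_poly A) {..c} = card K"
    by (simp add: char_poly_diagonal_mat[OF D diag] root_count_prod_linear_factors K_def)
  moreover assume "\<not> card S \<le> root_count (char_poly A) {..c}"
  ultimately have "card K < card S"
    by simp
  then obtain x where x: "x \<in> carrier_vec n" "x \<noteq> 0\<^sub>v n"
    and supp: "\<forall>i<n. i \<notin> S \<longrightarrow> x $ i = 0" and orth: "\<forall>j\<in>K. col P j \<bullet> x = 0"
    using exists_supported_vec_orthogonal[OF S, of K "col P"] by (auto simp: K_def)
  define y where "y = P\<^sup>T *\<^sub>v x"
  have y: "y \<in> carrier_vec n"
    using P x by (simp add: y_def)
  have norm_y: "y \<bullet> y = (\<Sum>j<n. (y $ j)\<^sup>2)"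
    using y by (simp add: scalar_prod_def lessThan_atLeast0 power2_eq_square)
  have "(\<Sum>j<n. D $$ (j,j) * (y $ j)\<^sup>2) \<le> c * (\<Sum>j<n. (y $ j)\<^sup>2)"
    using bound[OF x(1) supp] orthogonal_similar_quadratic_form[OF A sim x(1)]
    by (simp add: diagonal_mat_quadratic_form[OF D diag y] norm_y flip: y_def)
  moreover have "y $ j = 0" if "j < n" "D $$ (j,j) \<le> c" for j
    using orth that P by (simp add: y_def K_def)
  ultimately have "\<forall>j\<in>{..<n}. y $ j = 0"
    by (intro weighted_squares_le_imp_zero) auto
  hence "x \<bullet> x = 0"
    using orthogonal_similar_quadratic_form(2)[OF A sim x(1)] by (simp add: norm_y flip: y_def)
  thus False
    using conjugate_square_eq_0_vec[OF x(1)] x(2) by simp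
qed

section \<open>The Laplacian of a simple graph\<close>

lemma laplacian_carrier_mat: "laplacian n E \<in> carrier_mat n n"
  by (simp add: laplacian_def)

lemma laplacian_transpose:
  assumes "simple_graph n E"
  shows "(laplacian n E)\<^sup>T = laplacian n E"
  using assms by (intro eq_matI) (auto simp: laplacian_def simple_graph_def)

lemma degree_eq_sum: "real (degree n E u) = (\<Sum>v<n. if E u v then 1 else 0)"
proof -
  have "degree n E u = card {v\<in>{..<n}. E u v}"
    by (simp add: degree_def)
  thus ?thesis
    by (simp add: sum.inter_filter[symmetric])
qed

lemma laplacian_mult_vec_index:
  assumes x: "x \<in> carrier_vec n" and u: "u < n"
  shows "(laplacian n E *\<^sub>v x) $ u
           = real (degree n E u) * x $ u - (\<Sum>v<n. if E u v then x $ v else 0)"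
proof -
  have "(laplacian n E *\<^sub>v x) $ u
          = (\<Sum>v<n. (if u = v then real (degree n E u) * x $ v else 0) - (if E u v then x $ v else 0))"
    using x u by (simp add: laplacian_def scalar_prod_def lessThan_atLeast0 left_diff_distrib
        if_distrib[of "\<lambda>t. t * _"] cong: if_cong)
  also have "\<dots> = real (degree n E u) * x $ u - (\<Sum>v<n. if E u v then x $ v else 0)"
    using u by (simp add: sum_subtractf)
  finally show ?thesis .
qed

lemma laplacian_quadratic_form:
  assumes x: "x \<in> carrier_vec n"
  shows "x \<bullet> (laplacian n E *\<^sub>v x)
           = (\<Sum>u<n. real (degree n E u) * (x $ u)\<^sup>2) - (\<Sum>u<n. \<Sum>v<n. if E u v then x $ u * x $ v else 0)"
proof -
  have "x \<bullet> (laplacian n E *\<^sub>v x) = (\<Sum>u<n. x $ u * (laplacian n E *\<^sub>v x) $ u)"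
    using x laplacian_carrier_mat[of n E] by (simp add: scalar_prod_def lessThan_atLeast0)
  also have "\<dots> = (\<Sum>u<n. real (degree n E u) * (x $ u)\<^sup>2
                          - (\<Sum>v<n. if E u v then x $ u * x $ v else 0))"
    using x by (intro sum.cong refl) (simp add: laplacian_mult_vec_index right_diff_distrib
        sum_distrib_left power2_eq_square mult_ac if_distrib[of "\<lambda>t. _ * t"] cong: if_cong)
  finally show ?thesis
    by (simp add: sum_subtractf)
qed

lemma laplacian_quadratic_form_edge_sum:
  assumes G: "simple_graph n E" and x: "x \<in> carrier_vec n"
  shows "2 * (x \<bullet> (laplacian n E *\<^sub>v x))
           = (\<Sum>u<n. \<Sum>v<n. if E u v then (x $ u - x $ v)\<^sup>2 else 0)"
proof -
  let ?sq = "\<lambda>u v. if E u v then (x $ u)\<^sup>2 else 0"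
  have deg: "(\<Sum>u<n. real (degree n E u) * (x $ u)\<^sup>2) = (\<Sum>u<n. \<Sum>v<n. ?sq u v)"
    by (simp add: degree_eq_sum sum_distrib_right if_distrib[of "\<lambda>t. t * _"] cong: if_cong)
  have "(\<Sum>u<n. \<Sum>v<n. ?sq u v) = (\<Sum>v<n. \<Sum>u<n. ?sq u v)"
    by (rule sum.swap)
  also have "\<dots> = (\<Sum>u<n. \<Sum>v<n. if E u v then (x $ v)\<^sup>2 else 0)"
    using G unfolding simple_graph_def by (intro sum.cong refl) auto
  finally have swap: "(\<Sum>u<n. \<Sum>v<n. ?sq u v) = (\<Sum>u<n. \<Sum>v<n. if E u v then (x $ v)\<^sup>2 else 0)" .
  have "(if E u v then (x $ u - x $ v)\<^sup>2 else 0)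
          = ?sq u v + (if E u v then (x $ v)\<^sup>2 else 0) - 2 * (if E u v then x $ u * x $ v else 0)"
    for u v
    by (simp add: power2_diff)
  hence "(\<Sum>u<n. \<Sum>v<n. if E u v then (x $ u - x $ v)\<^sup>2 else 0)
          = (\<Sum>u<n. \<Sum>v<n. ?sq u v) + (\<Sum>u<n. \<Sum>v<n. if E u v then (x $ v)\<^sup>2 else 0)
            - 2 * (\<Sum>u<n. \<Sum>v<n. if E u v then x $ u * x $ v else 0)"
    by (simp add: sum.distrib sum_subtractf sum_distrib_left)
  thus ?thesis
    unfolding laplacian_quadratic_form[OF x] deg swap by simp
qed

lemma laplacian_quadratic_form_nonneg:
  assumes "simple_graph n E" and "x \<in> carrier_vec n"
  shows "0 \<le> x \<bullet> (laplacian n E *\<^sub>v x)"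
proof -
  have "0 \<le> (\<Sum>u<n. \<Sum>v<n. if E u v then (x $ u - x $ v)\<^sup>2 else 0)"
    by (intro sum_nonneg) auto
  thus ?thesis
    using laplacian_quadratic_form_edge_sum[OF assms] by simp
qed

lemma laplacian_char_poly_root_nonneg:
  assumes "simple_graph n E" and "poly (char_poly (laplacian n E)) e = 0"
  shows "0 \<le> e"
  using eigenvalue_nonneg_of_psd[OF laplacian_carrier_mat laplacian_quadratic_form_nonneg[OF assms(1)]]
    eigenvalue_root_char_poly[OF laplacian_carrier_mat] assms(2) by blast

lemma degree_le_of_independent:
  assumes S: "independent_set n E S" and u: "u \<in> S"
  shows "degree n E u \<le> n - card S"
proof -
  have "{v. v < n \<and> E u v} \<subseteq> {0..<n} - S"
    using S u unfolding independent_set_def by auto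
  hence "degree n E u \<le> card ({0..<n} - S)"
    unfolding degree_def by (intro card_mono) auto
  also have "\<dots> = n - card S"
    using S finite_subset[of S "{0..<n}"] unfolding independent_set_def by (simp add: card_Diff_subset)
  finally show ?thesis .
qed

lemma laplacian_quadratic_form_le_on_independent_set:
  assumes S: "independent_set n E S" and x: "x \<in> carrier_vec n"
    and supp: "\<forall>i<n. i \<notin> S \<longrightarrow> x $ i = 0"
  shows "x \<bullet> (laplacian n E *\<^sub>v x) \<le> (real n - real (card S)) * (x \<bullet> x)"
proof -
  have "card S \<le> n"
    using S card_mono[of "{0..<n}" S] unfolding independent_set_def by simp
  hence deg: "real (degree n E u) \<le> real n - real (card S)" if "u \<in> S" for u
    using degree_le_of_independent[OF S that] by linarith
  have "(if E u v then x $ u * x $ v else 0) = 0" if "u < n" "v < n" for u v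
    using S supp that unfolding independent_set_def by auto
  hence "x \<bullet> (laplacian n E *\<^sub>v x) = (\<Sum>u<n. real (degree n E u) * (x $ u)\<^sup>2)"
    by (simp add: laplacian_quadratic_form[OF x])
  also have "\<dots> \<le> (\<Sum>u<n. (real n - real (card S)) * (x $ u)\<^sup>2)"
  proof (rule sum_mono)
    fix u assume "u \<in> {..<n}"
    thus "real (degree n E u) * (x $ u)\<^sup>2 \<le> (real n - real (card S)) * (x $ u)\<^sup>2"
      using deg supp by (cases "u \<in> S") (simp_all add: mult_right_mono)
  qed
  also have "\<dots> = (real n - real (card S)) * (x \<bullet> x)"
    using x by (simp add: scalar_prod_def lessThan_atLeast0 sum_distrib_left power2_eq_square)
  finally show ?thesis .
qed

lemma independence_number_attained:
  "\<exists>S. independent_set n E S \<and> card S = independence_number n E"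
proof -
  have "finite {S. independent_set n E S}"
    by (rule finite_subset[of _ "Pow {0..<n}"]) (auto simp: independent_set_def)
  moreover have "independent_set n E {}"
    by (simp add: independent_set_def)
  ultimately have "independence_number n E \<in> card ` {S. independent_set n E S}"
    unfolding independence_number_def by (intro Max_in) auto
  thus ?thesis
    by auto
qed

theorem mainTheorem1:
  fixes n :: nat and E :: "nat \<Rightarrow> nat \<Rightarrow> bool"
  assumes "simple_graph n E"
  shows "independence_number n E
           \<le> lap_eig_count n E {0 .. real n - real (independence_number n E)}"
proof -
  obtain S where S: "independent_set n E S" and card_S: "card S = independence_number n E"
    using independence_number_attained by blast
  let ?L = "laplacian n E" and ?c = "real n - real (card S)"
  have "card S \<le> root_count (char_poly ?L) {..?c}"
  proof (rule card_le_root_count_char_poly_of_quadratic_form_bound)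
    show "?L \<in> carrier_mat n n" "?L\<^sup>T = ?L"
      using laplacian_carrier_mat laplacian_transpose[OF assms] by auto
    show "S \<subseteq> {..<n}"
      using S unfolding independent_set_def by auto
  qed (rule laplacian_quadratic_form_le_on_independent_set[OF S])
  also have "\<dots> = root_count (char_poly ?L) {0..?c}"
    using laplacian_char_poly_root_nonneg[OF assms] by (intro root_count_cong) auto
  finally show ?thesis
    by (simp add: card_S lap_eig_count_def root_count_def)
qed

end
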